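(* Let $k$ be an odd positive integer. Then $\Bbbk_{-1}[u,v]^{G_{2,k}}\cong\Bbbk[u,v]^{\frac1{4k}(1,2k+1)}$; in particular it is a commutative cyclic quotient singularity.
   Context: $\Bbbk$ is algebraically closed of characteristic $0$; $\Bbbk_{-1}[u,v]=\Bbbk\langle u,v\rangle/(vu+uv)$; matrices $\begin{pmatrix}a&b\\c&d\end{pmatrix}$ act by $u\mapsto au+cv$, $v\mapsto bu+dv$. $G_{n,k}$ is generated by $\mathrm{diag}(\omega^{2k},\omega^{-2k})$ and $\begin{pmatrix}0&\omega^n\\\omega^n&0\end{pmatrix}$ for $\omega$ a primitive $(2nk)$th root of unity. $\frac1m(1,b)$ is the cyclic group generated by $\mathrm{diag}(\omega_m,\omega_m^b)$ acting on the commutative polynomial ring $\Bbbk[u,v]$. *)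

theory Defs
  imports "HOL-Library.Poly_Mapping" "HOL-Computational_Algebra.Polynomial"
begin

text \<open>Elements of the quantum plane k_q[u,v] (vu = q uv), for q = 1 (commutative
  polynomial ring k[u,v]) or q = -1 (skew ring k_{-1}[u,v]).  An element is a
  finitely supported coefficient function on the PBW basis u^i v^j, indexed by (i,j).\<close>

type_synonym 'k qpoly = "(nat \<times> nat) \<Rightarrow>\<^sub>0 'k"

definition qmonom :: "'k::zero \<Rightarrow> nat \<Rightarrow> nat \<Rightarrow> 'k qpoly" where
  "qmonom c i j = Poly_Mapping.single (i, j) c"

definition qmult :: "'k::comm_ring_1 \<Rightarrow> 'k qpoly \<Rightarrow> 'k qpoly \<Rightarrow> 'k qpoly" where
  "qmult q p r = (\<Sum>(i,j)\<in>Poly_Mapping.keys p. \<Sum>(a,b)\<in>Poly_Mapping.keys r.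
      qmonom (q ^ (j * a) * Poly_Mapping.lookup p (i,j) * Poly_Mapping.lookup r (a,b)) (i + a) (j + b))"

definition qone :: "'k::comm_ring_1 qpoly" where
  "qone = qmonom 1 0 0"

definition qscale :: "'k::comm_ring_1 \<Rightarrow> 'k qpoly \<Rightarrow> 'k qpoly" where
  "qscale c p = Poly_Mapping.map (\<lambda>x. c * x) p"

fun qpow :: "'k::comm_ring_1 \<Rightarrow> 'k qpoly \<Rightarrow> nat \<Rightarrow> 'k qpoly" where
  "qpow q p 0 = qone"
| "qpow q p (Suc n) = qmult q (qpow q p n) p"

text \<open>2x2 matrices ((a,b),(c,d)) encoded as (a,b,c,d).\<close>
type_synonym 'k mat2 = "'k \<times> 'k \<times> 'k \<times> 'k"

fun mat2_mult :: "'k::comm_ring_1 mat2 \<Rightarrow> 'k mat2 \<Rightarrow> 'k mat2" where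
  "mat2_mult (a,b,c,d) (a',b',c',d') =
     (a*a' + b*c', a*b' + b*d', c*a' + d*c', c*b' + d*d')"

definition mat2_id :: "'k::comm_ring_1 mat2" where
  "mat2_id = (1, 0, 0, 1)"

text \<open>The matrix (a,b,c,d) acts by u \<mapsto> a u + c v, v \<mapsto> b u + d v, extended
  multiplicatively (u^i v^j \<mapsto> (au+cv)^i (bu+dv)^j) and linearly.\<close>
fun mat2_act :: "'k::comm_ring_1 \<Rightarrow> 'k mat2 \<Rightarrow> 'k qpoly \<Rightarrow> 'k qpoly" where
  "mat2_act q (a,b,c,d) p =
     (\<Sum>(i,j)\<in>Poly_Mapping.keys p. qscale (Poly_Mapping.lookup p (i,j))
        (qmult q (qpow q (qmonom a 1 0 + qmonom c 0 1) i)
                 (qpow q (qmonom b 1 0 + qmonom d 0 1) j)))"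

text \<open>The (finite) group generated by a set of matrices: closure under products.\<close>
inductive_set gen_group :: "'k::comm_ring_1 mat2 set \<Rightarrow> 'k mat2 set" for S where
  gen_id: "mat2_id \<in> gen_group S"
| gen_step: "M \<in> S \<Longrightarrow> g \<in> gen_group S \<Longrightarrow> mat2_mult M g \<in> gen_group S"

definition invariants :: "'k::comm_ring_1 \<Rightarrow> 'k mat2 set \<Rightarrow> 'k qpoly set" where
  "invariants q G = {p. \<forall>M\<in>G. mat2_act q M p = p}"

definition primitive_root :: "'k::comm_ring_1 \<Rightarrow> nat \<Rightarrow> bool" where
  "primitive_root w m \<longleftrightarrow> 0 < m \<and> w ^ m = 1 \<and> (\<forall>r. 0 < r \<and> r < m \<longrightarrow> w ^ r \<noteq> 1)"

text \<open>G_{n,k} with respect to a primitive (2nk)-th root of unity w.\<close>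
definition G_nk :: "nat \<Rightarrow> nat \<Rightarrow> 'k::field \<Rightarrow> 'k mat2 set" where
  "G_nk n k w = gen_group {(w ^ (2*k), 0, 0, inverse (w ^ (2*k))), (0, w ^ n, w ^ n, 0)}"

text \<open>The cyclic group (1/m)(1,b) with respect to a primitive m-th root of unity w.\<close>
definition cyclic_grp :: "nat \<Rightarrow> nat \<Rightarrow> 'k::field \<Rightarrow> 'k mat2 set" where
  "cyclic_grp m b w = gen_group {(w, 0, 0, w ^ b)}"

definition qalg_iso :: "'k::comm_ring_1 \<Rightarrow> 'k qpoly set \<Rightarrow> 'k \<Rightarrow> 'k qpoly set \<Rightarrow> bool" where
  "qalg_iso p A q B \<longleftrightarrow> (\<exists>f. bij_betw f A B \<and> f qone = qone \<and>
     (\<forall>x\<in>A. \<forall>y\<in>A. f (x + y) = f x + f y \<and> f (qmult p x y) = qmult q (f x) (f y)) \<and>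
     (\<forall>c. \<forall>x\<in>A. f (qscale c x) = qscale c (f x)))"

end

theory Submission
  imports Defs "HOL-Library.Product_Plus"
begin

text \<open>
  Both invariant rings are described by conditions on coefficients: an element of
  k_{-1}[u,v] is G_{2,k}-invariant iff its monomials u^i v^j have 2k dividing i + j and
  its coefficients satisfy c_{ji} = (-1)^{ij} c_{ij}. For \<iota>^2 = -1 the twist
  u^i v^j \<mapsto> \<iota>^{j^2} u^i v^j is multiplicative from the skew product to the commutative
  one on elements of even degree, because \<iota>^{(j+b)^2} = \<iota>^{j^2} \<iota>^{b^2} (-1)^{jb};
  it carries these invariants onto the invariants in k[u,v] of the group generated by
  z^2 I and u \<mapsto> v, v \<mapsto> -u. Diagonalising the latter conjugates this group to
  the one generated by z^2 I and diag(z^k, -z^k), which for odd k is the cyclic group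
  generated by diag(z, z^{2k+1}) = diag(z, -z).
\<close>

lemma lookup_sum_single_inj:
  assumes "finite K" "inj s"
  shows "Poly_Mapping.lookup (\<Sum>x\<in>K. Poly_Mapping.single (s x) (f x)) (s y)
           = (if y \<in> K then f y else 0)"
proof -
  have "{x\<in>K. s x = s y} = (if y \<in> K then {y} else {})"
    using \<open>inj s\<close> by (auto dest: injD)
  then show ?thesis
    using assms(1) by (simp add: lookup_sum lookup_single when_def sum.inter_filter[symmetric])
qed

lemma poly_mapping_sum_single_keys:
  "(p::'a \<Rightarrow>\<^sub>0 'b::comm_monoid_add)
     = (\<Sum>x\<in>Poly_Mapping.keys p. Poly_Mapping.single x (Poly_Mapping.lookup p x))"
  by (rule poly_mapping_eqI)
     (simp add: lookup_sum_single_inj[where s=id, simplified] in_keys_iff)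

lemma poly_mapping_times_eq_sum:
  "(p::'a::cancel_comm_monoid_add \<Rightarrow>\<^sub>0 'b::comm_semiring_1) * r
     = (\<Sum>x\<in>Poly_Mapping.keys p. \<Sum>y\<in>Poly_Mapping.keys r.
          Poly_Mapping.single (x + y) (Poly_Mapping.lookup p x * Poly_Mapping.lookup r y))"
proof -
  have "p * r = (\<Sum>x\<in>Poly_Mapping.keys p. Poly_Mapping.single x (Poly_Mapping.lookup p x))
      * (\<Sum>y\<in>Poly_Mapping.keys r. Poly_Mapping.single y (Poly_Mapping.lookup r y))"
    using poly_mapping_sum_single_keys[of p] poly_mapping_sum_single_keys[of r] by simp
  also have "\<dots> = (\<Sum>x\<in>Poly_Mapping.keys p. \<Sum>y\<in>Poly_Mapping.keys r.
      Poly_Mapping.single (x + y) (Poly_Mapping.lookup p x * Poly_Mapping.lookup r y))"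
    by (simp add: sum_distrib_left sum_distrib_right mult_single) (rule sum.swap)
  finally show ?thesis .
qed

lemma qpoly_eq_iff:
  "p = r \<longleftrightarrow> (\<forall>i j. Poly_Mapping.lookup p (i,j) = Poly_Mapping.lookup r (i,j))"
proof (intro iffI poly_mapping_eqI)
  fix x assume "\<forall>i j. Poly_Mapping.lookup p (i,j) = Poly_Mapping.lookup r (i,j)"
  then show "Poly_Mapping.lookup p x = Poly_Mapping.lookup r x"
    by (cases x) simp
qed simp

lemma lookup_const_times:
  "Poly_Mapping.lookup (Poly_Mapping.single 0 c * p) x = c * Poly_Mapping.lookup p x"
  by (simp add: mult_map_scale_conv_mult[symmetric] map.rep_eq when_def)

lemma qmult_single:
  "qmult q (Poly_Mapping.single x c) (Poly_Mapping.single y d)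
     = Poly_Mapping.single (x + y) (q ^ (snd x * fst y) * c * d)"
  by (cases x; cases y; cases "c = 0"; cases "d = 0") (simp_all add: qmult_def qmonom_def)

lemma qmult_1_eq_times: "qmult 1 p r = p * r"
  by (simp add: poly_mapping_times_eq_sum qmult_def qmonom_def case_prod_beta plus_prod_def)

lemma qone_eq_1: "qone = 1"
  by (simp add: qone_def qmonom_def zero_prod_def[symmetric])

lemma qscale_eq_const_times: "qscale c p = Poly_Mapping.single 0 c * p"
  by (simp add: qscale_def mult_map_scale_conv_mult)

lemma qpow_1_eq_power: "qpow 1 p n = p ^ n"
  by (induction n) (simp_all add: qone_eq_1 qmult_1_eq_times mult.commute)

lemma qpow_single_u: "qpow q (Poly_Mapping.single (1,0) a) n = Poly_Mapping.single (n,0) (a ^ n)"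
  by (induction n) (simp_all add: qone_def qmonom_def qmult_single mult.commute)

lemma qpow_single_v: "qpow q (Poly_Mapping.single (0,1) a) n = Poly_Mapping.single (0,n) (a ^ n)"
  by (induction n) (simp_all add: qone_def qmonom_def qmult_single mult.commute)

lemma lookup_mat2_act_diag:
  "Poly_Mapping.lookup (mat2_act q (a,0,0,d) p) (i,j) = Poly_Mapping.lookup p (i,j) * (a^i * d^j)"
proof -
  have "mat2_act q (a,0,0,d) p = (\<Sum>x\<in>Poly_Mapping.keys p.
      Poly_Mapping.single (id x) (Poly_Mapping.lookup p x * (a ^ fst x * d ^ snd x)))"
    by (simp add: qmonom_def qpow_single_u[unfolded One_nat_def] qpow_single_v[unfolded One_nat_def]
        qmult_single qscale_def case_prod_beta plus_prod_def mult.assoc)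
  then show ?thesis
    by (simp add: lookup_sum_single_inj[where s=id and y="(i,j)", simplified] in_keys_iff)
qed

lemma lookup_mat2_act_antidiag:
  "Poly_Mapping.lookup (mat2_act q (0,b,c,0) p) (i,j)
     = Poly_Mapping.lookup p (j,i) * (q^(i*j) * c^j * b^i)"
proof -
  have "mat2_act q (0,b,c,0) p = (\<Sum>x\<in>Poly_Mapping.keys p.
      Poly_Mapping.single (prod.swap x)
        (Poly_Mapping.lookup p x * (q ^ (fst x * snd x) * c ^ fst x * b ^ snd x)))"
    (is "_ = (\<Sum>x\<in>_. Poly_Mapping.single _ (?f x))")
    by (simp add: qmonom_def qpow_single_u[unfolded One_nat_def] qpow_single_v[unfolded One_nat_def]
        qmult_single qscale_def case_prod_beta plus_prod_def mult.assoc prod.swap_def)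
  then have "Poly_Mapping.lookup (mat2_act q (0,b,c,0) p) (prod.swap (j,i))
      = (if (j,i) \<in> Poly_Mapping.keys p then ?f (j,i) else 0)"
    by (simp only: lookup_sum_single_inj[OF finite_keys inj_swap])
  then show ?thesis
    by (simp add: in_keys_iff mult.commute)
qed

section \<open>The commutative action as substitution\<close>

definition poly_subst :: "'k::comm_ring_1 qpoly \<Rightarrow> 'k qpoly \<Rightarrow> 'k qpoly \<Rightarrow> 'k qpoly" where
  "poly_subst U V p = (\<Sum>x\<in>Poly_Mapping.keys p.
     Poly_Mapping.single 0 (Poly_Mapping.lookup p x) * U ^ fst x * V ^ snd x)"

lemma poly_subst_add: "poly_subst U V (p + r) = poly_subst U V p + poly_subst U V r"
  unfolding poly_subst_def
  by (rule setsum_keys_plus_distrib) (simp_all add: single_add distrib_right)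

lemma poly_subst_zero: "poly_subst U V 0 = 0"
  by (simp add: poly_subst_def)

lemma poly_subst_sum: "poly_subst U V (\<Sum>i\<in>I. f i) = (\<Sum>i\<in>I. poly_subst U V (f i))"
  by (induction I rule: infinite_finite_induct) (simp_all add: poly_subst_add poly_subst_zero)

lemma poly_subst_single:
  "poly_subst U V (Poly_Mapping.single x c) = Poly_Mapping.single 0 c * U ^ fst x * V ^ snd x"
  by (cases "c = 0") (simp_all add: poly_subst_def)

lemma poly_subst_times: "poly_subst U V (p * r) = poly_subst U V p * poly_subst U V r"
proof -
  have "poly_subst U V (p * r) = (\<Sum>x\<in>Poly_Mapping.keys p. \<Sum>y\<in>Poly_Mapping.keys r.
      (Poly_Mapping.single 0 (Poly_Mapping.lookup p x) * U ^ fst x * V ^ snd x) *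
      (Poly_Mapping.single 0 (Poly_Mapping.lookup r y) * U ^ fst y * V ^ snd y))"
    unfolding poly_mapping_times_eq_sum[of p r] poly_subst_sum poly_subst_single
    by (intro sum.cong refl) (simp add: mult_single power_add mult_ac)
  also have "\<dots> = poly_subst U V p * poly_subst U V r"
    unfolding poly_subst_def by (simp add: sum_distrib_left sum_distrib_right) (rule sum.swap)
  finally show ?thesis .
qed

lemma poly_subst_one: "poly_subst U V 1 = 1"
  by (simp add: poly_subst_def)

lemma poly_subst_const: "poly_subst U V (Poly_Mapping.single 0 c) = Poly_Mapping.single 0 c"
  by (simp add: poly_subst_single)

lemma poly_subst_power: "poly_subst U V (p ^ n) = poly_subst U V p ^ n"
  by (induction n) (simp_all add: poly_subst_times poly_subst_one)

lemma poly_subst_poly_subst: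
  "poly_subst U V (poly_subst U' V' p) = poly_subst (poly_subst U V U') (poly_subst U V V') p"
  unfolding poly_subst_def[of U' V'] poly_subst_def[of "poly_subst U V U'"]
  by (simp add: poly_subst_sum poly_subst_times poly_subst_const poly_subst_power)

definition linform :: "'k::comm_ring_1 \<Rightarrow> 'k \<Rightarrow> 'k qpoly" where
  "linform a b = Poly_Mapping.single (1,0) a + Poly_Mapping.single (0,1) b"

lemma poly_subst_linform:
  "poly_subst (linform a c) (linform b d) (linform x y) = linform (x*a + y*b) (x*c + y*d)"
  unfolding linform_def[of x y]
  by (simp add: poly_subst_add poly_subst_single linform_def algebra_simps mult_single single_add)

lemma poly_subst_u_v: "poly_subst (linform 1 0) (linform 0 1) p = p"
proof -
  have u: "linform 1 0 ^ n = Poly_Mapping.single (n,0) 1"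
    and v: "linform 0 1 ^ n = Poly_Mapping.single (0,n) 1" for n
    by (induction n) (simp_all add: linform_def mult_single zero_prod_def[symmetric])
  have "poly_subst (linform 1 0) (linform 0 1) p
      = (\<Sum>x\<in>Poly_Mapping.keys p. Poly_Mapping.single x (Poly_Mapping.lookup p x))"
    unfolding poly_subst_def by (intro sum.cong refl) (simp add: u v mult_single)
  then show ?thesis
    using poly_mapping_sum_single_keys[of p] by simp
qed

lemma mat2_act_1_eq_poly_subst:
  "mat2_act 1 (a,b,c,d) p = poly_subst (linform a c) (linform b d) p"
  by (simp add: poly_subst_def linform_def qmonom_def qscale_eq_const_times qmult_1_eq_times
      qpow_1_eq_power case_prod_beta mult.assoc)

declare mat2_act.simps [simp del]

lemma mat2_act_1_mat2_mult: "mat2_act 1 M (mat2_act 1 N p) = mat2_act 1 (mat2_mult M N) p"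
  by (cases M rule: prod_cases4; cases N rule: prod_cases4)
     (simp add: mat2_act_1_eq_poly_subst poly_subst_poly_subst poly_subst_linform algebra_simps)

lemma mat2_act_1_id: "mat2_act 1 mat2_id p = p"
  by (simp add: mat2_id_def mat2_act_1_eq_poly_subst poly_subst_u_v)

lemma mat2_act_1_add: "mat2_act 1 M (p + r) = mat2_act 1 M p + mat2_act 1 M r"
  by (cases M rule: prod_cases4) (simp add: mat2_act_1_eq_poly_subst poly_subst_add)

lemma mat2_act_1_times: "mat2_act 1 M (p * r) = mat2_act 1 M p * mat2_act 1 M r"
  by (cases M rule: prod_cases4) (simp add: mat2_act_1_eq_poly_subst poly_subst_times)

lemma mat2_act_1_qscale: "mat2_act 1 M (qscale c p) = qscale c (mat2_act 1 M p)"
  by (cases M rule: prod_cases4)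
     (simp add: mat2_act_1_eq_poly_subst qscale_eq_const_times poly_subst_times poly_subst_const)

lemma mat2_act_1_one: "mat2_act 1 M 1 = 1"
  by (cases M rule: prod_cases4) (simp add: mat2_act_1_eq_poly_subst poly_subst_one)

lemma invariants_1_gen_group: "invariants 1 (gen_group S) = {p. \<forall>M\<in>S. mat2_act 1 M p = p}"
proof (intro set_eqI iffI CollectI ballI)
  fix p M assume p: "p \<in> invariants 1 (gen_group S)" and "M \<in> S"
  then have "mat2_mult M mat2_id \<in> gen_group S"
    by (blast intro: gen_group.intros)
  then have "mat2_act 1 (mat2_mult M mat2_id) p = p"
    using p unfolding invariants_def by blast
  then show "mat2_act 1 M p = p"
    by (simp only: mat2_act_1_mat2_mult[symmetric] mat2_act_1_id)
next
  fix p assume "p \<in> {p. \<forall>M\<in>S. mat2_act 1 M p = p}"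
  then have fixed: "\<And>M. M \<in> S \<Longrightarrow> mat2_act 1 M p = p" by blast
  have "mat2_act 1 g p = p" if "g \<in> gen_group S" for g
    using that
  proof induction
    case gen_id
    show ?case by (rule mat2_act_1_id)
  next
    case (gen_step M g)
    then show ?case by (simp only: mat2_act_1_mat2_mult[symmetric] fixed)
  qed
  then show "p \<in> invariants 1 (gen_group S)"
    unfolding invariants_def by blast
qed

lemma bij_betw_mat2_act_1_conj:
  assumes PQ: "mat2_mult P Q = mat2_id" and QP: "mat2_mult Q P = mat2_id"
  shows "bij_betw (mat2_act 1 P) (invariants 1 (gen_group S))
           (invariants 1 (gen_group ((\<lambda>M. mat2_mult (mat2_mult P M) Q) ` S)))"
proof (rule bij_betw_byWitness[where f' = "mat2_act 1 Q"])
  have QP_cancel: "mat2_act 1 Q (mat2_act 1 P p) = p" for p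
    by (simp only: mat2_act_1_mat2_mult QP mat2_act_1_id)
  have PQ_cancel: "mat2_act 1 P (mat2_act 1 Q p) = p" for p
    by (simp only: mat2_act_1_mat2_mult PQ mat2_act_1_id)
  have conj: "mat2_act 1 (mat2_mult (mat2_mult P M) Q) p = mat2_act 1 P (mat2_act 1 M (mat2_act 1 Q p))"
    for M p by (simp only: flip: mat2_act_1_mat2_mult)
  show "\<forall>p\<in>invariants 1 (gen_group S). mat2_act 1 Q (mat2_act 1 P p) = p"
    and "\<forall>r\<in>invariants 1 (gen_group ((\<lambda>M. mat2_mult (mat2_mult P M) Q) ` S)).
           mat2_act 1 P (mat2_act 1 Q r) = r"
    by (simp_all add: QP_cancel PQ_cancel)
  show "mat2_act 1 P ` invariants 1 (gen_group S)
          \<subseteq> invariants 1 (gen_group ((\<lambda>M. mat2_mult (mat2_mult P M) Q) ` S))"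
    unfolding invariants_1_gen_group by (auto simp only: conj QP_cancel)
  show "mat2_act 1 Q ` invariants 1 (gen_group ((\<lambda>M. mat2_mult (mat2_mult P M) Q) ` S))
          \<subseteq> invariants 1 (gen_group S)"
    unfolding invariants_1_gen_group
  proof (intro image_subsetI CollectI ballI)
    fix r M assume r: "r \<in> {r. \<forall>M'\<in>(\<lambda>M. mat2_mult (mat2_mult P M) Q) ` S. mat2_act 1 M' r = r}"
      and "M \<in> S"
    then have "mat2_act 1 P (mat2_act 1 M (mat2_act 1 Q r)) = r"
      by (auto simp only: conj[symmetric])
    then show "mat2_act 1 M (mat2_act 1 Q r) = mat2_act 1 Q r"
      by (metis QP_cancel)
  qed
qed

lemma bij_betw_mat2_act_1_diagonalize_swap:
  fixes t c :: "'k::field_char_0"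
  assumes "t * t = -1"
  shows "bij_betw (mat2_act 1 (1/2, -t/2, 1/2, t/2))
           (invariants 1 (gen_group {(c,0,0,c), (0,-1,1,0)}))
           (invariants 1 (gen_group {(c,0,0,c), (-t,0,0,t)}))"
proof -
  let ?P = "(1/2, -t/2, 1/2, t/2) :: 'k mat2" and ?Q = "(1, 1, t, -t) :: 'k mat2"
  have PQ: "mat2_mult ?P ?Q = mat2_id" "mat2_mult ?Q ?P = mat2_id"
    and conj: "mat2_mult (mat2_mult ?P (c,0,0,c)) ?Q = (c,0,0,c)"
      "mat2_mult (mat2_mult ?P (0,-1,1,0)) ?Q = (-t,0,0,t)"
    using assms by (simp_all add: mat2_id_def field_simps)
  have "(\<lambda>M. mat2_mult (mat2_mult ?P M) ?Q) ` {(c,0,0,c), (0,-1,1,0)} = {(c,0,0,c), (-t,0,0,t)}"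
    by (simp only: image_insert image_empty conj)
  then show ?thesis
    using bij_betw_mat2_act_1_conj[OF PQ, of "{(c,0,0,c), (0,-1,1,0)}"] by (simp only:)
qed

definition degrees_dvd :: "nat \<Rightarrow> 'k::zero qpoly \<Rightarrow> bool" where
  "degrees_dvd m p \<longleftrightarrow> (\<forall>i j. Poly_Mapping.lookup p (i,j) \<noteq> 0 \<longrightarrow> m dvd i + j)"

lemma degrees_dvd_mult:
  "coprime a b \<Longrightarrow> degrees_dvd a p \<Longrightarrow> degrees_dvd b p \<Longrightarrow> degrees_dvd (a * b) p"
  by (simp add: degrees_dvd_def divides_mult)

lemma degrees_dvd_dvd: "degrees_dvd m p \<Longrightarrow> n dvd m \<Longrightarrow> degrees_dvd n p"
  by (auto simp: degrees_dvd_def intro: dvd_trans)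

lemma degrees_dvd_root_of_unity:
  fixes \<zeta> :: "'a::monoid_mult"
  assumes "degrees_dvd m p" and "\<zeta> ^ m = 1" and "Poly_Mapping.lookup p (i,j) \<noteq> 0"
  shows "\<zeta> ^ (i + j) = 1"
proof -
  obtain n where "i + j = m * n"
    using assms(1,3) unfolding degrees_dvd_def by blast
  then show ?thesis
    using assms(2) by (simp add: power_mult)
qed

lemma mat2_act_diag_fixed_iff:
  fixes a d :: "'k::idom"
  shows "mat2_act q (a,0,0,d) p = p
     \<longleftrightarrow> (\<forall>i j. Poly_Mapping.lookup p (i,j) \<noteq> 0 \<longrightarrow> a^i * d^j = 1)"
proof -
  have "Poly_Mapping.lookup p (i,j) * (a^i * d^j) = Poly_Mapping.lookup p (i,j)
      \<longleftrightarrow> (Poly_Mapping.lookup p (i,j) \<noteq> 0 \<longrightarrow> a^i * d^j = 1)" for i j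
    using mult_cancel_left[of "Poly_Mapping.lookup p (i,j)" "a^i * d^j" 1] by auto
  then show ?thesis
    by (simp add: qpoly_eq_iff lookup_mat2_act_diag)
qed

lemma primitive_root_iff_dvd:
  "primitive_root w m \<longleftrightarrow> 0 < m \<and> (\<forall>n. w ^ n = 1 \<longleftrightarrow> m dvd n)"
proof
  assume prim: "primitive_root w m"
  then have m: "0 < m" "w ^ m = 1"
    by (simp_all add: primitive_root_def)
  have "w ^ n = 1 \<longleftrightarrow> m dvd n" for n
  proof -
    have "w ^ n = w ^ (m * (n div m) + n mod m)"
      by simp
    also have "\<dots> = (w ^ m) ^ (n div m) * w ^ (n mod m)"
      by (simp only: power_add power_mult)
    finally have "w ^ n = w ^ (n mod m)"
      using m(2) by simp
    moreover have "w ^ (n mod m) = 1 \<longleftrightarrow> n mod m = 0"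
      using prim m(1) by (auto simp: primitive_root_def)
    ultimately show ?thesis by (simp add: dvd_eq_mod_eq_0)
  qed
  with m show "0 < m \<and> (\<forall>n. w ^ n = 1 \<longleftrightarrow> m dvd n)" by blast
next
  assume "0 < m \<and> (\<forall>n. w ^ n = 1 \<longleftrightarrow> m dvd n)"
  then show "primitive_root w m"
    by (auto simp: primitive_root_def dest: dvd_imp_le)
qed

lemma primitive_root_power:
  assumes "0 < d" "primitive_root w (d * m)"
  shows "primitive_root (w ^ d) m"
  using assms by (simp add: primitive_root_iff_dvd power_mult[symmetric])

lemma primitive_root_pow_half:
  fixes w :: "'k::idom"
  assumes "primitive_root w (2 * m)"
  shows "w ^ m = -1"
proof -
  have "(w ^ m)^2 = 1" "w ^ m \<noteq> 1"
    using assms by (auto simp: primitive_root_iff_dvd power_mult[symmetric] mult.commute)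
  then show ?thesis by (simp add: power2_eq_1_iff)
qed

lemma mat2_act_scalar_fixed_iff:
  fixes \<zeta> :: "'k::idom"
  assumes "primitive_root \<zeta> m"
  shows "mat2_act q (\<zeta>,0,0,\<zeta>) p = p \<longleftrightarrow> degrees_dvd m p"
  using assms by (simp add: mat2_act_diag_fixed_iff degrees_dvd_def primitive_root_iff_dvd
      power_add[symmetric])

section \<open>Invariants of G_{2,k}\<close>

lemma generator_in_gen_group: "M \<in> S \<Longrightarrow> M \<in> gen_group S"
  using gen_group.gen_step[OF _ gen_group.gen_id, of M S]
  by (cases M rule: prod_cases4) (simp add: mat2_id_def)

lemma gen_group_scalar_swap_elements:
  assumes "g \<in> gen_group {(-1,0,0,-1), (0,\<xi>,\<xi>,0)}" and "\<xi> ^ (2*k) = (1::'k::comm_ring_1)"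
  shows "\<exists>\<zeta>. \<zeta> ^ (2*k) = 1 \<and> (g = (\<zeta>,0,0,\<zeta>) \<or> g = (0,\<zeta>,\<zeta>,0))"
  using assms(1)
proof induction
  case gen_id
  show ?case by (rule exI[of _ 1]) (simp add: mat2_id_def)
next
  case (gen_step M g)
  then obtain \<zeta> where \<zeta>: "\<zeta> ^ (2*k) = 1" "g = (\<zeta>,0,0,\<zeta>) \<or> g = (0,\<zeta>,\<zeta>,0)"
    by blast
  have roots: "(-\<zeta>) ^ (2*k) = 1" "(\<xi> * \<zeta>) ^ (2*k) = 1"
    using \<zeta>(1) assms(2) by (simp_all add: power_mult_distrib)
  from gen_step(1) consider "M = (-1,0,0,-1)" | "M = (0,\<xi>,\<xi>,0)"
    by blast
  then show ?case
  proof cases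
    case 1
    then have "mat2_mult M g = (-\<zeta>,0,0,-\<zeta>) \<or> mat2_mult M g = (0,-\<zeta>,-\<zeta>,0)"
      using \<zeta>(2) by auto
    then show ?thesis using roots(1) by blast
  next
    case 2
    then have "mat2_mult M g = (0,\<xi>*\<zeta>,\<xi>*\<zeta>,0) \<or> mat2_mult M g = (\<xi>*\<zeta>,0,0,\<xi>*\<zeta>)"
      using \<zeta>(2) by auto
    then show ?thesis using roots(2) by blast
  qed
qed

lemma mat2_act_antidiag_eq_swap:
  assumes "degrees_dvd m p" and "\<xi> ^ m = 1"
  shows "mat2_act q (0,\<xi>,\<xi>,0) p = mat2_act q (0,1,1,0) p"
proof -
  have "Poly_Mapping.lookup p (j,i) * (q^(i*j) * \<xi>^j * \<xi>^i)
      = Poly_Mapping.lookup p (j,i) * (q^(i*j) * 1^j * 1^i)" for i j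
    using degrees_dvd_root_of_unity[OF assms, of j i]
    by (cases "Poly_Mapping.lookup p (j,i) = 0") (simp_all add: mult.assoc flip: power_add)
  then show ?thesis
    unfolding qpoly_eq_iff lookup_mat2_act_antidiag by blast
qed

lemma degrees_dvd_of_scalar_swap_invariant:
  fixes \<xi> :: "'k::field_char_0"
  assumes "odd k" and \<xi>: "primitive_root \<xi> (2*k)"
    and p: "p \<in> invariants (-1) (gen_group {(-1,0,0,-1), (0,\<xi>,\<xi>,0)})"
  shows "degrees_dvd (2*k) p"
proof -
  let ?G = "gen_group {(-1,0,0,-1), (0,\<xi>,\<xi>,0)}"
  have fixed: "mat2_act (-1) M p = p" if "M \<in> ?G" for M
    using p that unfolding invariants_def by blast
  have "degrees_dvd 2 p"
  proof -
    have "primitive_root (-1::'k) 2"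
      by (auto simp: primitive_root_def less_2_cases_iff)
    moreover have "mat2_act (-1) (-1,0,0,-1) p = p"
      by (simp add: fixed generator_in_gen_group)
    ultimately show ?thesis
      using mat2_act_scalar_fixed_iff by blast
  qed
  moreover have "degrees_dvd k p"
  proof -
    have "primitive_root (\<xi> ^ 2) k"
      using primitive_root_power[of 2 \<xi> k] \<xi> by simp
    moreover have "mat2_mult (0,\<xi>,\<xi>,0) (0,\<xi>,\<xi>,0) \<in> ?G"
      by (intro gen_group.gen_step generator_in_gen_group) simp_all
    then have "mat2_act (-1) (\<xi>^2,0,0,\<xi>^2) p = p"
      using fixed by (simp add: power2_eq_square)
    ultimately show ?thesis
      using mat2_act_scalar_fixed_iff by blast
  qed
  ultimately show ?thesis
    using \<open>odd k\<close> by (intro degrees_dvd_mult) auto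
qed

lemma invariants_scalar_swap_iff:
  fixes \<xi> :: "'k::field_char_0"
  assumes "odd k" and \<xi>: "primitive_root \<xi> (2*k)"
  shows "p \<in> invariants (-1) (gen_group {(-1,0,0,-1), (0,\<xi>,\<xi>,0)})
    \<longleftrightarrow> degrees_dvd (2*k) p \<and> mat2_act (-1) (0,1,1,0) p = p"
proof
  assume p: "p \<in> invariants (-1) (gen_group {(-1,0,0,-1), (0,\<xi>,\<xi>,0)})"
  then have deg: "degrees_dvd (2*k) p"
    using degrees_dvd_of_scalar_swap_invariant[OF assms] by blast
  have "mat2_act (-1) (0,\<xi>,\<xi>,0) p = p"
    using p generator_in_gen_group[of "(0,\<xi>,\<xi>,0)"] unfolding invariants_def by blast
  then have "mat2_act (-1) (0,1,1,0) p = p"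
    using mat2_act_antidiag_eq_swap[OF deg, of \<xi>] \<xi> by (simp add: primitive_root_def)
  with deg show "degrees_dvd (2*k) p \<and> mat2_act (-1) (0,1,1,0) p = p" ..
next
  assume "degrees_dvd (2*k) p \<and> mat2_act (-1) (0,1,1,0) p = p"
  then have deg: "degrees_dvd (2*k) p" and swap: "mat2_act (-1) (0,1,1,0) p = p"
    by blast+
  have "mat2_act (-1) M p = p" if root: "\<zeta> ^ (2*k) = 1" and M: "M = (\<zeta>,0,0,\<zeta>) \<or> M = (0,\<zeta>,\<zeta>,0)"
    for M \<zeta>
    using M
  proof
    assume "M = (\<zeta>,0,0,\<zeta>)"
    then show ?thesis
      using degrees_dvd_root_of_unity[OF deg root]
      by (simp add: mat2_act_diag_fixed_iff flip: power_add)
  next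
    assume "M = (0,\<zeta>,\<zeta>,0)"
    then show ?thesis
      using mat2_act_antidiag_eq_swap[OF deg root] swap by simp
  qed
  moreover have "\<xi> ^ (2*k) = 1"
    using \<xi> by (simp add: primitive_root_def)
  ultimately show "p \<in> invariants (-1) (gen_group {(-1,0,0,-1), (0,\<xi>,\<xi>,0)})"
    unfolding invariants_def using gen_group_scalar_swap_elements by blast
qed

lemma invariants_G_nk_2_iff:
  fixes w :: "'k::field_char_0"
  assumes "odd k" and w: "primitive_root w (4*k)"
  shows "p \<in> invariants (-1) (G_nk 2 k w)
    \<longleftrightarrow> degrees_dvd (2*k) p \<and> mat2_act (-1) (0,1,1,0) p = p"
proof -
  have "w ^ (2*k) = -1"
    using primitive_root_pow_half[of w "2*k"] w by (simp add: mult.assoc)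
  then have "G_nk 2 k w = gen_group {(-1,0,0,-1), (0,w^2,w^2,0)}"
    by (simp add: G_nk_def)
  moreover have "primitive_root (w^2) (2*k)"
    using primitive_root_power[of 2 w "2*k"] w by simp
  ultimately show ?thesis
    using invariants_scalar_swap_iff[OF \<open>odd k\<close>] by simp
qed

lemma invariants_G_nk_2_degrees_even:
  fixes w :: "'k::field_char_0"
  assumes "odd k" and "primitive_root w (4*k)" and "p \<in> invariants (-1) (G_nk 2 k w)"
  shows "degrees_dvd 2 p"
proof -
  have "degrees_dvd (2*k) p"
    using assms invariants_G_nk_2_iff by blast
  then show ?thesis
    by (rule degrees_dvd_dvd) simp
qed

section \<open>The cocycle twist\<close>

definition twist :: "'k::comm_ring_1 \<Rightarrow> 'k qpoly \<Rightarrow> 'k qpoly" where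
  "twist t p = Poly_Mapping.mapp (\<lambda>x c. t ^ (snd x * snd x) * c) p"

lemma lookup_twist: "Poly_Mapping.lookup (twist t p) (i,j) = t ^ (j*j) * Poly_Mapping.lookup p (i,j)"
  by (simp add: twist_def lookup_mapp when_def in_keys_iff)

lemma twist_twist: "t * t = -1 \<Longrightarrow> twist (-t) (twist t p) = p"
  by (simp add: qpoly_eq_iff lookup_twist flip: mult.assoc power_mult_distrib)

lemma twist_add: "twist t (p + r) = twist t p + twist t r"
  by (simp add: qpoly_eq_iff lookup_twist lookup_add distrib_left)

lemma twist_zero: "twist t 0 = 0"
  by (simp add: qpoly_eq_iff lookup_twist)

lemma twist_sum: "twist t (\<Sum>i\<in>I. f i) = (\<Sum>i\<in>I. twist t (f i))"
  by (induction I rule: infinite_finite_induct) (simp_all add: twist_add twist_zero)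

lemma twist_single: "twist t (Poly_Mapping.single (i,j) c) = Poly_Mapping.single (i,j) (t ^ (j*j) * c)"
  by (simp add: qpoly_eq_iff lookup_twist lookup_single when_def)

lemma twist_qscale: "twist t (qscale c p) = qscale c (twist t p)"
  by (simp add: qpoly_eq_iff lookup_twist qscale_eq_const_times lookup_const_times mult.left_commute)

lemma twist_one: "twist t 1 = 1"
  by (simp add: qpoly_eq_iff lookup_twist lookup_one when_def zero_prod_def)

lemma keys_twist: "t \<noteq> (0::'k::idom) \<Longrightarrow> Poly_Mapping.keys (twist t p) = Poly_Mapping.keys p"
  by (auto simp: in_keys_iff lookup_twist)

lemma degrees_dvd_twist: "t \<noteq> (0::'k::idom) \<Longrightarrow> degrees_dvd m (twist t p) \<longleftrightarrow> degrees_dvd m p"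
  by (simp add: degrees_dvd_def lookup_twist)

lemma power_square_exponent:
  fixes t :: "'k::comm_ring_1"
  assumes "t * t = -1"
  shows "t ^ (n*n) = (if even n then 1 else t)"
proof -
  have t4: "t ^ 4 = 1"
    using assms by (simp add: power4_eq_xxxx flip: mult.assoc)
  show ?thesis
  proof (cases "even n")
    case True
    then obtain m where "n*n = 4*(m*m)" by (auto elim!: evenE)
    then show ?thesis using True t4 by (simp add: power_mult)
  next
    case False
    then obtain m where "n*n = 4*(m*m+m) + 1" by (auto elim!: oddE simp: algebra_simps)
    then show ?thesis using False t4 by (simp add: power_mult power_add)
  qed
qed

lemma twist_cocycle:
  fixes t :: "'k::comm_ring_1"
  assumes "t * t = -1" and "even (a + b)"
  shows "t ^ ((j+b)*(j+b)) * (-1) ^ (j*a) = t ^ (j*j) * t ^ (b*b)"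
proof -
  have "t ^ ((j+b)*(j+b)) = t ^ (j*j) * t ^ (b*b) * (t*t) ^ (j*b)"
    by (simp add: algebra_simps power_add power_mult_distrib flip: power_mult)
  moreover have "(-1::'k) ^ (j*b) * (-1) ^ (j*a) = 1"
    using assms(2) by (simp add: algebra_simps flip: power_add)
  ultimately show ?thesis
    using assms(1) by (simp add: mult.assoc)
qed

lemma twist_qmult:
  fixes t :: "'k::idom"
  assumes t: "t * t = -1" and "degrees_dvd 2 r"
  shows "twist t (qmult (-1) p r) = twist t p * twist t r"
proof -
  have "t \<noteq> 0" using t by auto
  have even: "even (a + b)" if "(a,b) \<in> Poly_Mapping.keys r" for a b
    using that \<open>degrees_dvd 2 r\<close> by (simp add: degrees_dvd_def in_keys_iff)
  have "twist t p * twist t r = qmult 1 (twist t p) (twist t r)"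
    by (simp add: qmult_1_eq_times)
  also have "\<dots> = (\<Sum>(i,j)\<in>Poly_Mapping.keys p. \<Sum>(a,b)\<in>Poly_Mapping.keys r.
      Poly_Mapping.single (i + a, j + b)
        (t ^ (j*j) * t ^ (b*b) * Poly_Mapping.lookup p (i,j) * Poly_Mapping.lookup r (a,b)))"
    by (simp add: qmult_def qmonom_def keys_twist[OF \<open>t \<noteq> 0\<close>] lookup_twist case_prod_beta mult_ac)
  also have "\<dots> = (\<Sum>(i,j)\<in>Poly_Mapping.keys p. \<Sum>(a,b)\<in>Poly_Mapping.keys r.
      Poly_Mapping.single (i + a, j + b) (t ^ ((j+b)*(j+b)) *
        ((-1) ^ (j*a) * Poly_Mapping.lookup p (i,j) * Poly_Mapping.lookup r (a,b))))"
    by (auto intro!: sum.cong simp: twist_cocycle[OF t even] simp flip: mult.assoc)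
  also have "\<dots> = twist t (qmult (-1) p r)"
    by (simp add: qmult_def qmonom_def twist_sum twist_single case_prod_beta)
  finally show ?thesis ..
qed

lemma twist_sign_identity:
  fixes t :: "'k::comm_ring_1"
  assumes "t * t = -1" and "even (i + j)"
  shows "t ^ (i*i) * (-1) ^ i = t ^ (j*j) * (-1) ^ (i*j)"
  using assms by (cases "even i") (simp_all add: power_square_exponent)

lemma twist_swap_fixed_iff:
  fixes t :: "'k::idom"
  assumes t: "t * t = -1" and "degrees_dvd 2 p"
  shows "mat2_act (-1) (0,1,1,0) p = p \<longleftrightarrow> mat2_act 1 (0,-1,1,0) (twist t p) = twist t p"
proof -
  have "t \<noteq> 0"
    using t by auto
  have "Poly_Mapping.lookup p (j,i) * ((-1) ^ (i*j) * 1^j * 1^i) = Poly_Mapping.lookup p (i,j)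
      \<longleftrightarrow> t ^ (i*i) * Poly_Mapping.lookup p (j,i) * (1 ^ (i*j) * 1^j * (-1)^i)
          = t ^ (j*j) * Poly_Mapping.lookup p (i,j)"
    for i j
  proof (cases "even (i + j)")
    case True
    have "t ^ (i*i) * Poly_Mapping.lookup p (j,i) * (1 ^ (i*j) * 1^j * (-1)^i)
        = (t ^ (i*i) * (-1) ^ i) * Poly_Mapping.lookup p (j,i)"
      by (simp add: mult_ac)
    also have "\<dots> = t ^ (j*j) * (Poly_Mapping.lookup p (j,i) * ((-1) ^ (i*j) * 1^j * 1^i))"
      by (simp only: twist_sign_identity[OF t True]) (simp add: mult_ac)
    finally have eq: "t ^ (i*i) * Poly_Mapping.lookup p (j,i) * (1 ^ (i*j) * 1^j * (-1)^i)
        = t ^ (j*j) * (Poly_Mapping.lookup p (j,i) * ((-1) ^ (i*j) * 1^j * 1^i))" .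
    show ?thesis
      unfolding eq using \<open>t \<noteq> 0\<close> by simp
  next
    case False
    then have "Poly_Mapping.lookup p (i,j) = 0" "Poly_Mapping.lookup p (j,i) = 0"
      using \<open>degrees_dvd 2 p\<close> by (auto simp: degrees_dvd_def add.commute)
    then show ?thesis by simp
  qed
  then show ?thesis
    unfolding qpoly_eq_iff lookup_mat2_act_antidiag lookup_twist by blast
qed

lemma bij_betw_twist_invariants:
  fixes w \<zeta> t :: "'k::field_char_0"
  assumes "odd k" "primitive_root w (4*k)" "primitive_root \<zeta> (2*k)" and t: "t * t = -1"
  shows "bij_betw (twist t) (invariants (-1) (G_nk 2 k w))
           (invariants 1 (gen_group {(\<zeta>,0,0,\<zeta>), (0,-1,1,0)}))"
proof (rule bij_betw_byWitness[where f' = "twist (-t)"])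
  let ?A = "invariants (-1) (G_nk 2 k w)"
  let ?C = "invariants 1 (gen_group {(\<zeta>,0,0,\<zeta>), (0,-1,1,0)})"
  have t0: "t \<noteq> 0" and t': "(-t) * (-t) = -1"
    using t by auto
  have A: "p \<in> ?A \<longleftrightarrow> degrees_dvd (2*k) p \<and> mat2_act (-1) (0,1,1,0) p = p" for p
    using invariants_G_nk_2_iff assms(1,2) by blast
  have C: "r \<in> ?C \<longleftrightarrow> degrees_dvd (2*k) r \<and> mat2_act 1 (0,-1,1,0) r = r" for r
    using mat2_act_scalar_fixed_iff[OF assms(3)] by (simp add: invariants_1_gen_group)
  have swap: "mat2_act (-1) (0,1,1,0) p = p \<longleftrightarrow> mat2_act 1 (0,-1,1,0) (twist t p) = twist t p"
    if "degrees_dvd (2*k) p" for p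
    using twist_swap_fixed_iff[OF t degrees_dvd_dvd[OF that]] by simp
  show "\<forall>p\<in>?A. twist (-t) (twist t p) = p"
    using twist_twist[OF t] by blast
  show "\<forall>r\<in>?C. twist t (twist (-t) r) = r"
    using twist_twist[OF t'] by simp
  show "twist t ` ?A \<subseteq> ?C"
    using A C swap degrees_dvd_twist[OF t0] by blast
  show "twist (-t) ` ?C \<subseteq> ?A"
  proof
    fix p assume "p \<in> twist (-t) ` ?C"
    then obtain r where r: "r \<in> ?C" "p = twist (-t) r" by blast
    then have "twist t p = r"
      using twist_twist[OF t'] by simp
    moreover have "degrees_dvd (2*k) p"
      using r C degrees_dvd_twist[of "-t"] t0 by simp
    ultimately show "p \<in> ?A"
      using A C swap r(1) by simp
  qed
qed

section \<open>The cyclic group 1/(4k)(1,2k+1)\<close>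

lemma cyclic_exponent_dvd_iff:
  fixes k i j :: nat
  assumes "odd k"
  shows "4*k dvd i + (2*k+1)*j \<longleftrightarrow> 2*k dvd i + j \<and> 4 dvd i + 3*j"
proof
  assume h: "4*k dvd i + (2*k+1)*j"
  have "2*k dvd (i + j) + 2*k*j"
    using dvd_trans[OF _ h, of "2*k"] by (simp add: algebra_simps)
  then have "2*k dvd i + j"
    by (simp add: dvd_add_left_iff)
  moreover have "4 dvd (i + 3*j) + 2*(k-1)*j"
  proof -
    have "i + (2*k+1)*j = (i + 3*j) + 2*(k-1)*j"
      using \<open>odd k\<close> by (cases k) (simp_all add: algebra_simps)
    moreover have "4 dvd i + (2*k+1)*j"
      using h by (rule dvd_trans[rotated]) simp
    ultimately show ?thesis by (simp only:)
  qed
  moreover have "4 dvd 2*(k-1)*j"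
    using \<open>odd k\<close> by (auto elim!: oddE)
  ultimately show "2*k dvd i + j \<and> 4 dvd i + 3*j"
    by (simp add: dvd_add_left_iff)
next
  assume "2*k dvd i + j \<and> 4 dvd i + 3*j"
  then obtain m where m: "i + j = 2*k*m" and "4 dvd i + 3*j"
    by blast
  moreover have "i + 3*j = 2*(k*m + j)"
    using m by (simp add: algebra_simps)
  ultimately have "4 dvd 2*(k*m + j)"
    by simp
  then have "even (k*m + j)"
    using nat_mult_dvd_cancel1[of 2 2 "k*m + j"] by simp
  then have "even (m + j)"
    using \<open>odd k\<close> by auto
  then obtain n where n: "m + j = 2*n"
    by (elim evenE)
  have "i + (2*k+1)*j = 2*k*(m + j)"
    using m by (simp add: algebra_simps)
  also have "\<dots> = 4*k*n"
    using n by simp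
  finally show "4*k dvd i + (2*k+1)*j"
    by simp
qed

lemma invariants_cyclic_grp_4k:
  fixes z :: "'k::field_char_0"
  assumes "odd k" and z: "primitive_root z (4*k)"
  shows "invariants 1 (cyclic_grp (4*k) (2*k+1) z)
       = invariants 1 (gen_group {(z^2,0,0,z^2), (z^k,0,0,-(z^k))})"
proof -
  have "(z^k)^2 = -1"
    using primitive_root_pow_half[of z "2*k"] z by (simp add: mult.assoc mult.commute flip: power_mult)
  then have neg: "-(z^k) = (z^k)^3"
    by (simp add: power3_eq_cube power2_eq_square)
  have root: "z ^ n = 1 \<longleftrightarrow> 4*k dvd n" for n
    using z by (simp add: primitive_root_iff_dvd)
  have "0 < k"
    using \<open>odd k\<close> by (rule odd_pos)
  have "z ^ i * (z ^ (2*k+1)) ^ j = 1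
      \<longleftrightarrow> (z^2) ^ i * (z^2) ^ j = 1 \<and> (z^k) ^ i * (-(z^k)) ^ j = 1" for i j
  proof -
    have "z ^ i * (z ^ (2*k+1)) ^ j = z ^ (i + (2*k+1)*j)"
      "(z^2) ^ i * (z^2) ^ j = z ^ (2*(i + j))"
      "(z^k) ^ i * (-(z^k)) ^ j = z ^ (k*(i + 3*j))"
      unfolding neg by (simp_all only: power_add power_mult)
    moreover have "4*k dvd 2*(i+j) \<longleftrightarrow> 2*k dvd i + j"
      using nat_mult_dvd_cancel1[of 2 "2*k" "i+j"] by simp
    moreover have "4*k dvd k*(i + 3*j) \<longleftrightarrow> 4 dvd i + 3*j"
      using \<open>0 < k\<close> by (simp add: mult.commute[of 4 k])
    ultimately show ?thesis
      using cyclic_exponent_dvd_iff[OF \<open>odd k\<close>] root by simp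
  qed
  then show ?thesis
    unfolding invariants_1_gen_group cyclic_grp_def
    by (simp only: ball_simps mat2_act_diag_fixed_iff) blast
qed

lemma qalg_iso_twist_mat2_act:
  fixes t :: "'k::field"
  assumes t: "t * t = -1" and bij: "bij_betw (mat2_act 1 P \<circ> twist t) A B"
    and even: "\<And>y. y \<in> A \<Longrightarrow> degrees_dvd 2 y"
  shows "qalg_iso (-1) A 1 B"
  unfolding qalg_iso_def
proof (rule exI[of _ "mat2_act 1 P \<circ> twist t"], intro conjI ballI allI)
  show "bij_betw (mat2_act 1 P \<circ> twist t) A B"
    by (rule bij)
  show "(mat2_act 1 P \<circ> twist t) qone = qone"
    by (simp add: qone_eq_1 twist_one mat2_act_1_one)
  fix x y assume "y \<in> A"
  show "(mat2_act 1 P \<circ> twist t) (x + y) = (mat2_act 1 P \<circ> twist t) x + (mat2_act 1 P \<circ> twist t) y"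
    by (simp add: twist_add mat2_act_1_add)
  show "(mat2_act 1 P \<circ> twist t) (qmult (-1) x y)
      = qmult 1 ((mat2_act 1 P \<circ> twist t) x) ((mat2_act 1 P \<circ> twist t) y)"
    by (simp add: twist_qmult[OF t even[OF \<open>y \<in> A\<close>]] qmult_1_eq_times mat2_act_1_times)
next
  fix c x
  show "(mat2_act 1 P \<circ> twist t) (qscale c x) = qscale c ((mat2_act 1 P \<circ> twist t) x)"
    by (simp add: twist_qscale mat2_act_1_qscale)
qed

theorem mainTheorem16:
  fixes k :: nat and w z :: "'k::{alg_closed_field, field_char_0}"
  assumes "odd k"
    and "primitive_root w (2 * 2 * k)"
    and "primitive_root z (4 * k)"
  shows "qalg_iso (-1) (invariants (-1) (G_nk 2 k w))
                  1 (invariants 1 (cyclic_grp (4 * k) (2 * k + 1) z))"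
proof -
  have w: "primitive_root w (4*k)"
    using assms(2) by simp
  have \<zeta>: "primitive_root (z^2) (2*k)"
    using primitive_root_power[of 2 z "2*k"] assms(3) by simp
  define t where "t = -(z^k)"
  have "z ^ (2*k) = -1"
    using primitive_root_pow_half[of z "2*k"] assms(3) by (simp add: mult.assoc)
  then have t: "t * t = -1"
    by (simp add: t_def flip: power_add mult_2)
  have "bij_betw (mat2_act 1 (1/2, -t/2, 1/2, t/2))
      (invariants 1 (gen_group {(z^2,0,0,z^2), (0,-1,1,0)}))
      (invariants 1 (cyclic_grp (4 * k) (2 * k + 1) z))"
    using bij_betw_mat2_act_1_diagonalize_swap[OF t, of "z^2"] invariants_cyclic_grp_4k[OF assms(1,3)]
    by (simp add: t_def)
  with bij_betw_twist_invariants[OF assms(1) w \<zeta> t]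
  have "bij_betw (mat2_act 1 (1/2, -t/2, 1/2, t/2) \<circ> twist t)
      (invariants (-1) (G_nk 2 k w)) (invariants 1 (cyclic_grp (4 * k) (2 * k + 1) z))"
    by (rule bij_betw_trans)
  then show ?thesis
    using invariants_G_nk_2_degrees_even[OF assms(1) w] by (rule qalg_iso_twist_mat2_act[OF t])
qed

end
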